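(* Let $\Sigma$ be a finite alphabet, $\mathcal F\subseteq\Sigma^{\Sigma^*}$ and $T\in\mathbb N_+$, and let $\mathcal L(\mathcal F^{\mathrm{CoT}(T)})$ be the associated CoT loss class. If $\Sigma=\{0,1\}$, then $$\mathrm{VCdim}(\mathcal L(\mathcal F^{\mathrm{CoT}(T)}))\le3\,\mathrm{VCdim}(\mathcal F)\log_2\!\left(\frac{2T}{\ln2}\right).$$ For any non-binary finite $\Sigma$, $$\mathrm{VCdim}(\mathcal L(\mathcal F^{\mathrm{CoT}(T)}))\le3\,\mathrm{Ndim}(\mathcal F)\log_2\!\left(\frac{2\,\mathrm{Ndim}(\mathcal F)\,|\Sigma|^2\,T}{e\ln2}\right).$$
   Context: For $f:\Sigma^*\to\Sigma$, $\bar f(\mathbf x)$ is $\mathbf x$ with $f(\mathbf x)$ appended and $f^{\mathrm{CoT}(T)}=\bar f^{\circ T}$. The loss class $\mathcal L(\mathcal F^{\mathrm{CoT}(T)})=\{\ell_f:f\in\mathcal F\}$ consists of the $\{0,1\}$-valued functions on strings $\mathbf z$ (of length at least $T$) given by $\ell_f(\mathbf z)=\mathbf 1[\mathbf z\ne f^{\mathrm{CoT}(T)}(\mathbf x)]$, where $\mathbf x$ is $\mathbf z$ with its last $T$ tokens removed. $\mathrm{VCdim}$ is VC dimension. Natarajan dimension $\mathrm{Ndim}(\mathcal H)$: the largest size of a set $S$ for which there are $h_0,h_1$ with $h_0(\mathbf x)\ne h_1(\mathbf x)$ on $S$ such that for every $U\subseteq S$ some $h\in\mathcal H$ agrees with $h_0$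 on $U$ and with $h_1$ on $S\setminus U$. *)

theory Defs
  imports Complex_Main "HOL-Library.Extended_Nat" "HOL-Library.Cardinality"
begin

definition cot_step :: "('a list \<Rightarrow> 'a) \<Rightarrow> 'a list \<Rightarrow> 'a list" where
  "cot_step f x = x @ [f x]"

definition cot :: "('a list \<Rightarrow> 'a) \<Rightarrow> nat \<Rightarrow> 'a list \<Rightarrow> 'a list" where
  "cot f T = (cot_step f ^^ T)"

text \<open>Loss function: true (=1) iff z differs from the CoT output on z with last T tokens removed.
  Meaningful on strings of length at least T (the domain used below).\<close>
definition loss :: "('a list \<Rightarrow> 'a) \<Rightarrow> nat \<Rightarrow> 'a list \<Rightarrow> bool" where
  "loss f T z = (z \<noteq> cot f T (take (length z - T) z))"

definition loss_class :: "('a list \<Rightarrow> 'a) set \<Rightarrow> nat \<Rightarrow> ('a list \<Rightarrow> bool) set" where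
  "loss_class F T = (\<lambda>f. loss f T) ` F"

definition shatters :: "('x \<Rightarrow> bool) set \<Rightarrow> 'x set \<Rightarrow> bool" where
  "shatters H S = (\<forall>U\<subseteq>S. \<exists>h\<in>H. \<forall>x\<in>S. h x = (x \<in> U))"

definition VCdim_on :: "'x set \<Rightarrow> ('x \<Rightarrow> bool) set \<Rightarrow> enat" where
  "VCdim_on D H = Sup {enat (card S) | S. finite S \<and> S \<subseteq> D \<and> shatters H S}"

abbreviation VCdim :: "('x \<Rightarrow> bool) set \<Rightarrow> enat" where
  "VCdim H \<equiv> VCdim_on UNIV H"

definition N_shatters :: "('x \<Rightarrow> 'y) set \<Rightarrow> 'x set \<Rightarrow> bool" where
  "N_shatters H S = (\<exists>h0 h1. (\<forall>x\<in>S. h0 x \<noteq> h1 x) \<and>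
      (\<forall>U\<subseteq>S. \<exists>h\<in>H. (\<forall>x\<in>U. h x = h0 x) \<and> (\<forall>x\<in>S - U. h x = h1 x)))"

definition Ndim :: "('x \<Rightarrow> 'y) set \<Rightarrow> enat" where
  "Ndim H = Sup {enat (card S) | S. finite S \<and> N_shatters H S}"

end

(*
  If the loss class shatters m strings of length at least T, its 2^m labellings are realised by
  pairwise different restrictions of F to the at most m T prefixes queried by the chain of thought:
  the loss at z only depends on f at the prefixes of z of lengths |z| - T, ..., |z| - 1.
  Natarajan's lemma bounds the number of restrictions of F to an n-set by
  sum_{i <= d} (n choose i) q^i with d = Ndim F and q = (|Sigma| choose 2); over a binary alphabet
  N-shattering is shattering, so d = VCdim F works. Comparing 2^m with the resulting bound
  (e q m T / d)^d and using ln x <= x - 1 gives m <= 2 d log2 (2 q T / ln 2), from which both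
  stated bounds follow by elementary estimates.
*)
theory Submission
  imports Defs "HOL-Library.FuncSet" "HOL-Library.Countable"
begin

section \<open>Weighted Sauer--Shelah sums\<close>

definition sauer_bound :: "nat \<Rightarrow> nat \<Rightarrow> nat \<Rightarrow> nat" where
  "sauer_bound q n d = (\<Sum>i\<le>d. (n choose i) * q ^ i)"

lemma sauer_bound_0_left: "sauer_bound q 0 d = 1"
  unfolding sauer_bound_def by (induction d) auto

lemma sauer_bound_0_right: "sauer_bound q n 0 = 1"
  unfolding sauer_bound_def by simp

lemma sauer_bound_0_weight: "sauer_bound 0 n d = 1"
  unfolding sauer_bound_def by (induction d) auto

lemma sauer_bound_Suc_Suc:
  "sauer_bound q (Suc n) (Suc d) = sauer_bound q n (Suc d) + q * sauer_bound q n d"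
proof -
  have "sauer_bound q (Suc n) (Suc d) = 1 + (\<Sum>i\<le>d. (Suc n choose Suc i) * q ^ Suc i)"
    unfolding sauer_bound_def by (subst sum.atMost_Suc_shift) simp
  also have "\<dots> = (1 + (\<Sum>i\<le>d. (n choose Suc i) * q ^ Suc i)) + (\<Sum>i\<le>d. (n choose i) * q ^ Suc i)"
    by (simp add: sum.distrib algebra_simps)
  also have "1 + (\<Sum>i\<le>d. (n choose Suc i) * q ^ Suc i) = sauer_bound q n (Suc d)"
    unfolding sauer_bound_def by (simp only: sum.atMost_Suc_shift) simp
  also have "(\<Sum>i\<le>d. (n choose i) * q ^ Suc i) = q * sauer_bound q n d"
    unfolding sauer_bound_def by (simp add: sum_distrib_left algebra_simps)
  finally show ?thesis .
qed

lemma sauer_bound_mono: "n \<le> n' \<Longrightarrow> sauer_bound q n d \<le> sauer_bound q n' d"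
  unfolding sauer_bound_def by (intro sum_mono mult_right_mono binomial_right_mono) auto

lemma sauer_bound_le_exp:
  assumes "1 \<le> d" "d \<le> n" "1 \<le> q"
  shows "real (sauer_bound q n d) \<le> (exp 1 * real q * real n / real d) ^ d"
proof -
  define r where "r = real d / real n"
  have r: "0 < r" "r \<le> 1" using assms by (auto simp: r_def)
  have "real (sauer_bound q n d) \<le> (\<Sum>i\<le>d. real (n choose i) * real q ^ d)"
    unfolding sauer_bound_def of_nat_sum
    by (intro sum_mono) (use assms in \<open>auto intro: mult_left_mono power_increasing\<close>)
  also have "\<dots> \<le> (\<Sum>i\<le>d. real (n choose i) * real q ^ d * (r ^ i / r ^ d))"
  proof (intro sum_mono)
    fix i assume "i \<in> {..d}"
    then have "1 \<le> r ^ i / r ^ d"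
      using r by (simp add: power_decreasing)
    then show "real (n choose i) * real q ^ d \<le> real (n choose i) * real q ^ d * (r ^ i / r ^ d)"
      using mult_left_mono[of 1 "r ^ i / r ^ d" "real (n choose i) * real q ^ d"] by simp
  qed
  also have "\<dots> = real q ^ d / r ^ d * (\<Sum>i\<le>d. real (n choose i) * r ^ i)"
    by (simp add: sum_distrib_left field_simps)
  also have "\<dots> \<le> real q ^ d / r ^ d * (\<Sum>i\<le>n. real (n choose i) * r ^ i)"
    using r assms by (intro mult_left_mono sum_mono2) auto
  also have "(\<Sum>i\<le>n. real (n choose i) * r ^ i) = (r + 1) ^ n"
    by (simp add: binomial_ring)
  also have "real q ^ d / r ^ d * (r + 1) ^ n \<le> real q ^ d / r ^ d * exp r ^ n"
    using r by (intro mult_left_mono power_mono) (auto simp: add.commute)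
  also have "exp r ^ n = exp 1 ^ d"
    using assms by (simp add: r_def flip: exp_of_nat_mult)
  also have "real q ^ d / r ^ d * exp 1 ^ d = (exp 1 * real q * real n / real d) ^ d"
    using assms by (simp add: r_def power_divide power_mult_distrib field_simps)
  finally show ?thesis .
qed

section \<open>Natarajan's lemma\<close>

lemma bij_betw_doubleton_to_nat_less:
  "bij_betw (\<lambda>(a, b). {a, b}) {(a, b). to_nat (a :: 'y::countable) < to_nat (b :: 'y)} {A. card A = 2}"
proof (rule bij_betwI')
  show "((\<lambda>(a, b). {a, b}) p = (\<lambda>(a, b). {a, b}) p') = (p = p')"
    if "p \<in> {(a, b). to_nat a < to_nat b}" "p' \<in> {(a, b). to_nat a < to_nat b}" for p p' :: "'y \<times> 'y"
    using that by (cases p; cases p') (auto simp: doubleton_eq_iff)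
  show "(\<lambda>(a, b). {a, b}) p \<in> {A. card A = 2}" if "p \<in> {(a, b). to_nat a < to_nat b}" for p :: "'y \<times> 'y"
    using that by (auto simp: card_insert_if)
  show "\<exists>p\<in>{(a, b). to_nat a < to_nat b}. A = (\<lambda>(a, b). {a, b}) p" if A: "A \<in> {A. card A = 2}" for A :: "'y set"
  proof -
    obtain a b where ab: "A = {a, b}" "a \<noteq> b"
      using A by (auto simp: card_2_iff)
    then have "to_nat a \<noteq> to_nat b"
      by simp
    then show ?thesis
    proof (rule linorder_neqE_nat)
      assume "to_nat a < to_nat b"
      then show ?thesis
        using ab by auto
    next
      assume "to_nat b < to_nat a"
      then show ?thesis
        using ab by (auto simp: insert_commute)
    qed
  qed
qed

definition trace :: "('x \<Rightarrow> 'y) set \<Rightarrow> 'x set \<Rightarrow> ('x \<Rightarrow> 'y) set" where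
  "trace H S = (\<lambda>h. restrict h S) ` H"

definition extension_values :: "('x \<Rightarrow> 'y) set \<Rightarrow> 'x set \<Rightarrow> ('x \<Rightarrow> 'y) \<Rightarrow> 'x \<Rightarrow> 'y set" where
  "extension_values H S g x = {h x |h. h \<in> H \<and> restrict h S = g}"

definition forks :: "('x \<Rightarrow> 'y) set \<Rightarrow> 'x set \<Rightarrow> 'x \<Rightarrow> 'y \<Rightarrow> 'y \<Rightarrow> ('x \<Rightarrow> 'y) set" where
  "forks H S x a b = {h \<in> H. h x = a \<and> (\<exists>h'\<in>H. restrict h' S = restrict h S \<and> h' x = b)}"

lemma finite_trace:
  "finite S \<Longrightarrow> finite (trace (H :: ('x \<Rightarrow> 'y::finite) set) S)"
  unfolding trace_def by (rule finite_subset[OF _ finite_PiE[of S "\<lambda>_. UNIV"]]) auto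

lemma card_trace_insert:
  fixes H :: "('x \<Rightarrow> 'y::finite) set"
  assumes "finite S"
  shows "card (trace H (insert x S)) = (\<Sum>g\<in>trace H S. card (extension_values H S g x))"
proof -
  have "bij_betw (\<lambda>r. (restrict r S, r x)) (trace H (insert x S)) (SIGMA g:trace H S. extension_values H S g x)"
  proof (rule bij_betw_imageI)
    show "inj_on (\<lambda>r. (restrict r S, r x)) (trace H (insert x S))"
      by (rule inj_onI) (auto simp: trace_def fun_eq_iff restrict_def split: if_splits)
    show "(\<lambda>r. (restrict r S, r x)) ` trace H (insert x S) = (SIGMA g:trace H S. extension_values H S g x)"
      by (auto simp: trace_def extension_values_def image_iff fun_eq_iff restrict_def) metis
  qed
  then show ?thesis
    using assms by (simp add: bij_betw_same_card finite_trace)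
qed

lemma trace_forks:
  "trace (forks H S x a b) S
     = {g \<in> trace H S. a \<in> extension_values H S g x \<and> b \<in> extension_values H S g x}"
  unfolding trace_def forks_def extension_values_def by (auto simp: image_iff) metis

lemma card_le_Suc_card_pairs:
  assumes P: "\<And>a b. a \<noteq> b \<Longrightarrow> (a, b) \<in> P \<or> (b, a) \<in> P" and "finite E"
  shows "card E \<le> Suc (card {p \<in> P. p \<in> E \<times> E})"
proof (cases "E = {}")
  case False
  then obtain a where a: "a \<in> E"
    by auto
  define pair where "pair b = (if (a, b) \<in> P then (a, b) else (b, a))" for b
  have "inj_on pair (E - {a})"
    by (rule inj_onI) (auto simp: pair_def split: if_splits)
  moreover have "pair ` (E - {a}) \<subseteq> {p \<in> P. p \<in> E \<times> E}"
    using a P by (auto simp: pair_def)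
  ultimately have "card (E - {a}) \<le> card {p \<in> P. p \<in> E \<times> E}"
    using \<open>finite E\<close> by (intro card_inj_on_le) auto
  then show ?thesis
    using card.remove[OF \<open>finite E\<close> a] by simp
qed simp

(* A pattern on S whose extensions take the values V at x has at most 1 + |P \<inter> V \<times> V| extensions;
   those counted by the pair (a, b) are exactly the traces of forks H S x a b. *)
lemma card_trace_insert_le:
  fixes H :: "('x \<Rightarrow> 'y::finite) set"
  assumes "\<And>a b. a \<noteq> b \<Longrightarrow> (a, b) \<in> P \<or> (b, a) \<in> P" and "finite S"
  shows "card (trace H (insert x S))
           \<le> card (trace H S) + (\<Sum>(a, b)\<in>P. card (trace (forks H S x a b) S))"
proof -
  let ?V = "\<lambda>g. extension_values H S g x"
  have "card (trace H (insert x S)) = (\<Sum>g\<in>trace H S. card (?V g))"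
    using \<open>finite S\<close> by (rule card_trace_insert)
  also have "\<dots> \<le> (\<Sum>g\<in>trace H S. Suc (card {p \<in> P. p \<in> ?V g \<times> ?V g}))"
    using assms(1) by (intro sum_mono card_le_Suc_card_pairs) auto
  also have "\<dots> = card (trace H S) + (\<Sum>p\<in>P. card {g \<in> trace H S. p \<in> ?V g \<times> ?V g})"
    using sum_multicount_gen[of "trace H S" P "\<lambda>g p. p \<in> ?V g \<times> ?V g"] \<open>finite S\<close>
    by (simp add: sum_Suc finite_trace)
  also have "(\<Sum>p\<in>P. card {g \<in> trace H S. p \<in> ?V g \<times> ?V g})
      = (\<Sum>(a, b)\<in>P. card (trace (forks H S x a b) S))"
    by (intro sum.cong) (auto simp: trace_forks)
  finally show ?thesis .
qed

lemma N_shatters_empty_iff: "N_shatters H {} \<longleftrightarrow> H \<noteq> {}"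
  unfolding N_shatters_def by auto

lemma N_shatters_insert_forks:
  assumes "N_shatters (forks H S x a b) T" "x \<notin> T" "T \<subseteq> S" "a \<noteq> b"
  shows "N_shatters H (insert x T)"
proof -
  obtain h0 h1 where h01: "\<forall>y\<in>T. h0 y \<noteq> h1 y"
    and pattern: "\<And>U. U \<subseteq> T \<Longrightarrow> \<exists>h\<in>forks H S x a b. (\<forall>y\<in>U. h y = h0 y) \<and> (\<forall>y\<in>T - U. h y = h1 y)"
    using assms(1) unfolding N_shatters_def by blast
  have "\<exists>h\<in>H. (\<forall>y\<in>U. h y = (h0(x := a)) y) \<and> (\<forall>y\<in>insert x T - U. h y = (h1(x := b)) y)"
    if U: "U \<subseteq> insert x T" for U
  proof (cases "x \<in> U")
    case True
    then obtain h where "h \<in> forks H S x a b" "\<forall>y\<in>U - {x}. h y = h0 y" "\<forall>y\<in>T - (U - {x}). h y = h1 y"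
      using pattern[of "U - {x}"] U by blast
    then show ?thesis
      using True \<open>x \<notin> T\<close> by (intro bexI[of _ h]) (auto simp: forks_def)
  next
    case False
    then obtain h where h: "h \<in> forks H S x a b" "\<forall>y\<in>U. h y = h0 y" "\<forall>y\<in>T - U. h y = h1 y"
      using pattern[of U] U by blast
    then obtain h' where h': "h' \<in> H" "restrict h' S = restrict h S" "h' x = b"
      by (auto simp: forks_def)
    have "h' y = h y" if "y \<in> T" for y
      using h'(2) that \<open>T \<subseteq> S\<close> by (metis restrict_apply' subsetD)
    then show ?thesis
      using False U h h' \<open>x \<notin> T\<close> by (intro bexI[of _ h']) auto
  qed
  moreover have "\<forall>y\<in>insert x T. (h0(x := a)) y \<noteq> (h1(x := b)) y"
    using h01 \<open>a \<noteq> b\<close> \<open>x \<notin> T\<close> by auto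
  ultimately show ?thesis
    unfolding N_shatters_def by blast
qed

lemma card_N_shattered_forks_less:
  assumes "N_shatters (forks H S x a b) T" "T \<subseteq> S" "x \<notin> S" "finite S" "a \<noteq> b"
    and "\<And>T. T \<subseteq> insert x S \<Longrightarrow> N_shatters H T \<Longrightarrow> card T \<le> d"
  shows "card T < d"
proof -
  have "x \<notin> T" "finite T"
    using assms(2-4) finite_subset by auto
  moreover have "N_shatters H (insert x T)"
    using assms(1) \<open>x \<notin> T\<close> assms(2,5) by (rule N_shatters_insert_forks)
  then have "card (insert x T) \<le> d"
    using assms(2) by (intro assms(6)) auto
  ultimately show ?thesis
    by simp
qed

lemma card_trace_le_sauer_bound_tournament:
  fixes H :: "('x \<Rightarrow> 'y::finite) set" and P :: "('y \<times> 'y) set"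
  assumes P_irrefl: "\<And>a b. (a, b) \<in> P \<Longrightarrow> a \<noteq> b"
    and P_total: "\<And>a b. a \<noteq> b \<Longrightarrow> (a, b) \<in> P \<or> (b, a) \<in> P"
    and "finite S" and "\<And>T. T \<subseteq> S \<Longrightarrow> N_shatters H T \<Longrightarrow> card T \<le> d"
  shows "card (trace H S) \<le> sauer_bound (card P) (card S) d"
  using assms(3,4)
proof (induction S arbitrary: H d rule: finite_induct)
  case empty
  have "trace H {} \<subseteq> {\<lambda>_. undefined}"
    by (auto simp: trace_def)
  then show ?case
    using card_mono[of "{\<lambda>_. undefined}" "trace H {}"] by (simp add: sauer_bound_0_left)
next
  case (insert x S)
  have IH_H: "card (trace H S) \<le> sauer_bound (card P) (card S) d"
    using insert.prems by (intro insert.IH) auto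
  have card_N_shattered_forks: "card T < d"
    if "(a, b) \<in> P" "T \<subseteq> S" "N_shatters (forks H S x a b) T" for a b T
    using that(3,2) insert.hyps(2,1) P_irrefl[OF that(1)] insert.prems by (rule card_N_shattered_forks_less)
  have "card (trace H (insert x S))
          \<le> card (trace H S) + (\<Sum>(a, b)\<in>P. card (trace (forks H S x a b) S))"
    using P_total insert.hyps(1) by (rule card_trace_insert_le)
  also have "\<dots> \<le> sauer_bound (card P) (card (insert x S)) d"
  proof (cases d)
    case 0
    then have "forks H S x a b = {}" if "(a, b) \<in> P" for a b
      using card_N_shattered_forks[OF that, of "{}"] by (auto simp: N_shatters_empty_iff)
    then have "(\<Sum>(a, b)\<in>P. card (trace (forks H S x a b) S)) = 0"
      by (intro sum.neutral) (auto simp: trace_def)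
    then show ?thesis
      using IH_H 0 by (simp add: sauer_bound_0_right)
  next
    case (Suc d')
    have "card (trace (forks H S x a b) S) \<le> sauer_bound (card P) (card S) d'"
      if "(a, b) \<in> P" for a b
      using card_N_shattered_forks[OF that] Suc by (intro insert.IH) (auto simp: less_Suc_eq_le)
    then have "(\<Sum>(a, b)\<in>P. card (trace (forks H S x a b) S)) \<le> card P * sauer_bound (card P) (card S) d'"
      using sum_mono[of P "\<lambda>(a, b). card (trace (forks H S x a b) S)" "\<lambda>_. sauer_bound (card P) (card S) d'"]
      by auto
    then show ?thesis
      using IH_H Suc insert.hyps by (simp add: sauer_bound_Suc_Suc)
  qed
  finally show ?case .
qed

lemma natarajan_lemma:
  fixes H :: "('x \<Rightarrow> 'y::finite) set"
  assumes "finite S" and "\<And>T. T \<subseteq> S \<Longrightarrow> N_shatters H T \<Longrightarrow> card T \<le> d"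
  shows "card (trace H S) \<le> sauer_bound (CARD('y) choose 2) (card S) d"
proof -
  let ?P = "{(a, b). to_nat (a :: 'y) < to_nat (b :: 'y)}"
  have "card ?P = card {A :: 'y set. card A = 2}"
    by (rule bij_betw_same_card[OF bij_betw_doubleton_to_nat_less])
  then have "card ?P = CARD('y) choose 2"
    using n_subsets[of "UNIV :: 'y set" 2] by simp
  moreover have "card (trace H S) \<le> sauer_bound (card ?P) (card S) d"
  proof (rule card_trace_le_sauer_bound_tournament[OF _ _ assms])
    show "a \<noteq> b" if "(a, b) \<in> ?P" for a b
      using that by auto
    show "(a, b) \<in> ?P \<or> (b, a) \<in> ?P" if "a \<noteq> b" for a b
    proof -
      have "to_nat a \<noteq> to_nat b"
        using that by simp
      then show ?thesis
        by (rule linorder_neqE_nat) simp_all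
    qed
  qed
  ultimately show ?thesis
    by simp
qed

section \<open>Chain-of-thought losses and shattering\<close>

lemma cot_0: "cot f 0 x = x"
  by (simp add: cot_def)

lemma cot_Suc: "cot f (Suc n) x = cot f n x @ [f (cot f n x)]"
  by (simp add: cot_def cot_step_def)

lemma append_eq_cot_iff:
  "x @ ys = cot f (length ys) x \<longleftrightarrow> (\<forall>j<length ys. f (x @ take j ys) = ys ! j)"
proof (induction ys rule: rev_induct)
  case (snoc y ys)
  have "x @ ys @ [y] = cot f (length (ys @ [y])) x
          \<longleftrightarrow> x @ ys = cot f (length ys) x \<and> f (x @ ys) = y"
    by (auto simp: cot_Suc)
  also have "\<dots> \<longleftrightarrow> (\<forall>j<length (ys @ [y]). f (x @ take j (ys @ [y])) = (ys @ [y]) ! j)"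
    using snoc.IH by (auto simp: less_Suc_eq nth_append)
  finally show ?case .
qed (simp add: cot_0)

lemma loss_append_iff:
  "loss f (length ys) (x @ ys) \<longleftrightarrow> (\<exists>j<length ys. f (x @ take j ys) \<noteq> ys ! j)"
  by (simp add: loss_def append_eq_cot_iff)

definition cot_queries :: "nat \<Rightarrow> 'a list \<Rightarrow> 'a list set" where
  "cot_queries T z = (\<lambda>i. take i z) ` {length z - T..<length z}"

lemma card_cot_queries_le: "card (cot_queries T z) \<le> T"
  unfolding cot_queries_def using card_image_le[of "{length z - T..<length z}" "\<lambda>i. take i z"] by simp

lemma loss_cong:
  assumes "T \<le> length z" and "\<And>p. p \<in> cot_queries T z \<Longrightarrow> f p = g p"
  shows "loss f T z = loss g T z"
proof -
  obtain x ys where z: "z = x @ ys" and T: "T = length ys"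
    using assms(1) by (metis append_take_drop_id diff_diff_cancel length_drop)
  have "f (x @ take j ys) = g (x @ take j ys)" if "j < T" for j
  proof (rule assms(2))
    show "x @ take j ys \<in> cot_queries T z"
      using that unfolding z T cot_queries_def by (auto intro!: image_eqI[of _ _ "length x + j"])
  qed
  then show ?thesis
    unfolding z T loss_append_iff by auto
qed

lemma two_pow_card_shattered_le:
  fixes F :: "('a::finite list \<Rightarrow> 'a) set"
  assumes "finite Z" "Z \<subseteq> {z. T \<le> length z}" "shatters (loss_class F T) Z"
    and "\<And>S. finite S \<Longrightarrow> N_shatters F S \<Longrightarrow> card S \<le> d"
  shows "2 ^ card Z \<le> sauer_bound (CARD('a) choose 2) (card Z * T) d"
proof -
  define S where "S = (\<Union>z\<in>Z. cot_queries T z)"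
  have "finite S"
    unfolding S_def cot_queries_def using \<open>finite Z\<close> by simp
  have "card S \<le> card Z * T"
  proof -
    have "card S \<le> (\<Sum>z\<in>Z. card (cot_queries T z))"
      unfolding S_def by (rule card_UN_le[OF \<open>finite Z\<close>])
    also have "\<dots> \<le> card Z * T"
      using sum_bounded_above[of Z "\<lambda>z. card (cot_queries T z)" T] card_cot_queries_le by auto
    finally show ?thesis .
  qed
  have loss_restrict: "loss (restrict f S) T z = loss f T z" if "z \<in> Z" for f z
    using that assms(2) by (intro loss_cong) (auto simp: S_def)
  have "Pow Z \<subseteq> (\<lambda>g. {z \<in> Z. loss g T z}) ` trace F S"
  proof
    fix U assume "U \<in> Pow Z"
    then obtain f where f: "f \<in> F" "\<forall>z\<in>Z. loss f T z = (z \<in> U)"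
      using assms(3) unfolding shatters_def loss_class_def by blast
    have "U = {z \<in> Z. loss (restrict f S) T z}"
      using \<open>U \<in> Pow Z\<close> f(2) loss_restrict by auto
    moreover have "restrict f S \<in> trace F S"
      using f(1) by (simp add: trace_def)
    ultimately show "U \<in> (\<lambda>g. {z \<in> Z. loss g T z}) ` trace F S"
      by blast
  qed
  then have "card (Pow Z) \<le> card ((\<lambda>g. {z \<in> Z. loss g T z}) ` trace F S)"
    using \<open>finite S\<close> by (intro card_mono) (simp_all add: finite_trace)
  also have "\<dots> \<le> card (trace F S)"
    using \<open>finite S\<close> by (intro card_image_le finite_trace)
  also have "\<dots> \<le> sauer_bound (CARD('a) choose 2) (card S) d"
  proof (rule natarajan_lemma[OF \<open>finite S\<close>])
    show "card S' \<le> d" if "S' \<subseteq> S" "N_shatters F S'" for S'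
      using assms(4) finite_subset[OF that(1) \<open>finite S\<close>] that(2) .
  qed
  also have "\<dots> \<le> sauer_bound (CARD('a) choose 2) (card Z * T) d"
    using \<open>card S \<le> card Z * T\<close> by (rule sauer_bound_mono)
  finally show ?thesis
    using \<open>finite Z\<close> by (simp add: card_Pow)
qed

section \<open>Bounds on the VC dimension of the loss class\<close>

lemma card_le_log_of_two_pow_le_sauer_bound:
  fixes m d q T :: nat
  assumes "2 ^ m \<le> sauer_bound q (m * T) d" and "1 \<le> q" "1 \<le> d" "d \<le> m * T"
  shows "real m \<le> 2 * real d * log 2 (2 * real q * real T / ln 2)"
proof -
  define A where "A = 2 * real q * real T / ln 2"
  define B where "B = real m * ln 2 / (2 * real d)"
  have "0 < m * T"
    using assms(3,4) by linarith
  then have "0 < A" "0 < B"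
    using assms(2,3) by (auto simp: A_def B_def)
  have "(2::real) ^ m \<le> real (sauer_bound q (m * T) d)"
    using assms(1) by (simp only: numeral_power_le_of_nat_cancel_iff)
  also have "\<dots> \<le> (exp 1 * real q * real (m * T) / real d) ^ d"
    by (rule sauer_bound_le_exp[OF assms(3,4,2)])
  also have "exp 1 * real q * real (m * T) / real d = A * exp 1 * B"
    using assms(3) by (simp add: A_def B_def field_simps)
  finally have pow: "(2::real) ^ m \<le> (A * exp 1 * B) ^ d" .
  have "real m * ln 2 = ln ((2::real) ^ m)"
    by (simp add: ln_realpow)
  also have "\<dots> \<le> ln ((A * exp 1 * B) ^ d)"
    using pow \<open>0 < A\<close> \<open>0 < B\<close> by simp
  also have "\<dots> = real d * ln (A * exp 1 * B)"
    using \<open>0 < A\<close> \<open>0 < B\<close> by (simp add: ln_realpow)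
  \<comment> \<open>\<open>ln B \<le> B - 1\<close> turns the factor \<open>m\<close> inside the logarithm into the linear term \<open>m ln 2 / 2\<close>\<close>
  also have "\<dots> \<le> real d * (ln A + B)"
    using \<open>0 < A\<close> \<open>0 < B\<close> ln_le_minus_one[OF \<open>0 < B\<close>] by (intro mult_left_mono) (simp_all add: ln_mult)
  also have "\<dots> = real d * ln A + real m * ln 2 / 2"
    using assms(3) by (simp add: B_def field_simps)
  finally have "real m * ln 2 \<le> 2 * real d * ln A"
    by simp
  then show ?thesis
    by (simp add: log_def A_def field_simps)
qed

lemma VCdim_on_finite_le:
  assumes "\<And>Z. finite Z \<Longrightarrow> Z \<subseteq> D \<Longrightarrow> shatters H Z \<Longrightarrow> real (card Z) \<le> B" and "0 \<le> B"
  shows "VCdim_on D H \<noteq> \<infinity> \<and> real (the_enat (VCdim_on D H)) \<le> B"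
proof -
  have "VCdim_on D H \<le> enat (nat \<lfloor>B\<rfloor>)"
    unfolding VCdim_on_def
    by (rule Sup_least) (auto dest!: assms(1) simp: le_nat_floor)
  then obtain n where "VCdim_on D H = enat n" "n \<le> nat \<lfloor>B\<rfloor>"
    by (metis enat_ile enat_ord_simps(1))
  moreover have "real (nat \<lfloor>B\<rfloor>) \<le> B"
    using assms(2) by (rule of_nat_floor)
  ultimately show ?thesis
    by simp
qed

lemma card_le_VCdim: "VCdim H = enat d \<Longrightarrow> finite S \<Longrightarrow> shatters H S \<Longrightarrow> card S \<le> d"
  using Sup_upper[of "enat (card S)" "{enat (card S) |S. finite S \<and> S \<subseteq> UNIV \<and> shatters H S}"]
  unfolding VCdim_on_def by auto

lemma card_le_Ndim: "Ndim H = enat d \<Longrightarrow> finite S \<Longrightarrow> N_shatters H S \<Longrightarrow> card S \<le> d"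
  using Sup_upper[of "enat (card S)" "{enat (card S) |S. finite S \<and> N_shatters H S}"]
  unfolding Ndim_def by auto

lemma Ndim_eq_0_if_card_le_1:
  assumes "CARD('y) \<le> 1"
  shows "Ndim (H :: ('x \<Rightarrow> 'y::finite) set) = 0"
proof -
  have "S = {}" if S: "N_shatters H S" for S
  proof (rule ccontr)
    assume "S \<noteq> {}"
    then obtain h0 h1 :: "'x \<Rightarrow> 'y" and x where "h0 x \<noteq> h1 x"
      using S unfolding N_shatters_def by blast
    then have "card {h0 x, h1 x} \<le> CARD('y)"
      by (intro card_mono) auto
    with \<open>h0 x \<noteq> h1 x\<close> assms show False
      by simp
  qed
  then have "Ndim H \<le> 0"
    unfolding Ndim_def by (intro Sup_least) (auto simp: zero_enat_def)
  then show ?thesis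
    by simp
qed

lemma shatters_if_N_shatters:
  fixes H :: "('x \<Rightarrow> bool) set"
  assumes "N_shatters H S"
  shows "shatters H S"
  unfolding shatters_def
proof (intro allI impI)
  fix U assume "U \<subseteq> S"
  obtain h0 h1 where h01: "\<forall>x\<in>S. h0 x \<noteq> h1 x"
    and pattern: "\<forall>U\<subseteq>S. \<exists>h\<in>H. (\<forall>x\<in>U. h x = h0 x) \<and> (\<forall>x\<in>S - U. h x = h1 x)"
    using assms unfolding N_shatters_def by blast
  \<comment> \<open>follow \<open>h0\<close> where it gives the desired label; elsewhere \<open>h1 = Not \<circ> h0\<close> does\<close>
  define V where "V = {x \<in> S. h0 x = (x \<in> U)}"
  have "V \<subseteq> S"
    by (auto simp: V_def)
  then obtain h where "h \<in> H" "\<forall>x\<in>V. h x = h0 x" "\<forall>x\<in>S - V. h x = h1 x"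
    using pattern by blast
  then show "\<exists>h\<in>H. \<forall>x\<in>S. h x = (x \<in> U)"
    using h01 by (intro bexI[of _ h]) (auto simp: V_def)
qed

lemma ln_2_ge_three_fifths: "3 / 5 \<le> ln (2::real)"
proof -
  have "exp (3::real) = exp 1 ^ 3"
    by (simp flip: exp_of_nat_mult)
  also have "\<dots> \<le> 3 ^ 3"
    by (intro power_mono exp_le) simp
  also have "\<dots> \<le> 2 ^ 5"
    by simp
  finally have "ln (exp 3) \<le> ln ((2::real) ^ 5)"
    by (subst ln_le_cancel_iff) auto
  also have "ln ((2::real) ^ 5) = 5 * ln 2"
    by (simp only: ln_realpow zero_less_numeral of_nat_numeral)
  finally show ?thesis
    by simp
qed

lemma log_estimates_Ndim_bound:
  fixes k d T :: nat
  assumes "2 \<le> k" "1 \<le> d" "1 \<le> T"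
  shows "1 \<le> log 2 (2 * real d * real k ^ 2 * real T / (exp 1 * ln 2))"
    and "2 * log 2 (2 * real (k choose 2) * real T / ln 2)
           \<le> 3 * log 2 (2 * real d * real k ^ 2 * real T / (exp 1 * ln 2))"
proof -
  let ?L = "log 2 (2 * real d * real k ^ 2 * real T / (exp 1 * ln 2))"
  define w where "w = real k ^ 2 * real T / ln 2"
  have "4 \<le> real k ^ 2 * real T"
    using assms(1,3) power_mono[of 2 "real k" 2] mult_mono[of 4 "real k ^ 2" 1 "real T"] by simp
  also have "\<dots> \<le> w"
    unfolding w_def using ln_2_less_1 by (simp add: le_divide_eq mult_left_le)
  finally have "4 \<le> w" .
  have "2 * w / exp 1 = 1 * (2 * real k ^ 2 * real T / (exp 1 * ln 2))"
    by (simp add: w_def field_simps)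
  also have "\<dots> \<le> real d * (2 * real k ^ 2 * real T / (exp 1 * ln 2))"
    using assms(2) by (intro mult_right_mono) auto
  finally have w_le: "2 * w / exp 1 \<le> 2 * real d * real k ^ 2 * real T / (exp 1 * ln 2)"
    by (simp add: mult_ac)
  have "2 \<le> 2 * w / exp 1"
    using \<open>4 \<le> w\<close> exp_le by (simp add: field_simps)
  then show "1 \<le> ?L"
    using w_le by simp
  have "2 * (k choose 2) \<le> k * (k - 1)"
    unfolding choose_two by (rule times_div_less_eq_dividend)
  also have "\<dots> \<le> k ^ 2"
    by (simp add: power2_eq_square)
  finally have "2 * real (k choose 2) * real T / ln 2 \<le> w"
    unfolding w_def by (intro divide_right_mono mult_right_mono) (simp_all flip: of_nat_mult of_nat_power)
  moreover have "0 < 2 * real (k choose 2) * real T / ln 2"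
    using assms(1,3) by simp
  ultimately have "log 2 (2 * real (k choose 2) * real T / ln 2) \<le> log 2 w"
    by (intro log_mono) auto
  moreover have "log 2 (2 * w / exp 1) \<le> ?L"
    using w_le \<open>4 \<le> w\<close> by (intro log_mono) auto
  moreover have "log 2 (2 * w / exp 1) = 1 + log 2 w - 1 / ln 2"
    using \<open>4 \<le> w\<close> by (simp add: log_def ln_div ln_mult diff_divide_distrib add_divide_distrib)
  moreover have "2 \<le> log 2 w"
    using \<open>4 \<le> w\<close> by (simp add: le_log_iff)
  moreover have "3 / ln 2 \<le> (5::real)"
    using ln_2_ge_three_fifths by (simp add: divide_le_eq)
  ultimately show "2 * log 2 (2 * real (k choose 2) * real T / ln 2) \<le> 3 * ?L"
    by linarith
qed

lemma card_shattered_by_loss_class_le: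
  fixes F :: "('a::finite list \<Rightarrow> 'a) set"
  assumes "1 \<le> T" and "finite Z" "Z \<subseteq> {z. T \<le> length z}" "shatters (loss_class F T) Z"
    and "\<And>S. finite S \<Longrightarrow> N_shatters F S \<Longrightarrow> card S \<le> d" and "d < card Z"
  shows "real (card Z) \<le> 2 * real d * log 2 (2 * real (CARD('a) choose 2) * real T / ln 2)"
proof -
  let ?q = "CARD('a) choose 2"
  have pow: "2 ^ card Z \<le> sauer_bound ?q (card Z * T) d"
    using two_pow_card_shattered_le[OF assms(2-5)] .
  have "1 < (2::nat) ^ card Z"
    using \<open>d < card Z\<close> by (intro one_less_power) auto
  then have "sauer_bound ?q (card Z * T) d \<noteq> 1"
    using pow by linarith
  moreover have "sauer_bound 0 (card Z * T) d = 1" "sauer_bound ?q (card Z * T) 0 = 1"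
    by (rule sauer_bound_0_weight sauer_bound_0_right)+
  ultimately have "?q \<noteq> 0" "d \<noteq> 0"
    by metis+
  then have "1 \<le> ?q" "1 \<le> d"
    by linarith+
  moreover have "d \<le> card Z * T"
    using \<open>d < card Z\<close> assms(1) order_trans[of d "card Z" "card Z * T"] by simp
  ultimately show "real (card Z) \<le> 2 * real d * log 2 (2 * real ?q * real T / ln 2)"
    by (rule card_le_log_of_two_pow_le_sauer_bound[OF pow])
qed

lemma VCdim_loss_class_le:
  fixes F :: "('a::finite list \<Rightarrow> 'a) set"
  assumes "1 \<le> T" and "\<And>S. finite S \<Longrightarrow> N_shatters F S \<Longrightarrow> card S \<le> d"
    and "d \<noteq> 0 \<Longrightarrow> 1 \<le> L"
    and "d \<noteq> 0 \<Longrightarrow> 2 * log 2 (2 * real (CARD('a) choose 2) * real T / ln 2) \<le> 3 * L"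
  shows "VCdim_on {z. T \<le> length z} (loss_class F T) \<noteq> \<infinity> \<and>
         real (the_enat (VCdim_on {z. T \<le> length z} (loss_class F T))) \<le> 3 * real d * L"
proof (rule VCdim_on_finite_le)
  let ?X = "log 2 (2 * real (CARD('a) choose 2) * real T / ln 2)"
  have "real d * 1 \<le> real d * (3 * L)" and "real d * (2 * ?X) \<le> real d * (3 * L)"
    using assms(3,4) by (cases "d = 0"; auto intro: mult_left_mono)+
  then have d_le: "real d \<le> 3 * real d * L" and "2 * real d * ?X \<le> 3 * real d * L"
    by (simp_all add: mult_ac)
  then show "real (card Z) \<le> 3 * real d * L"
    if "finite Z" "Z \<subseteq> {z. T \<le> length z}" "shatters (loss_class F T) Z" for Z
    using card_shattered_by_loss_class_le[OF assms(1) that assms(2)] by (cases "card Z \<le> d") auto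
  from d_le show "0 \<le> 3 * real d * L"
    by linarith
qed

lemma VCdim_loss_class_binary:
  fixes F :: "(bool list \<Rightarrow> bool) set"
  assumes "1 \<le> T" and "VCdim F = enat d"
  shows "VCdim_on {z. T \<le> length z} (loss_class F T) \<noteq> \<infinity> \<and>
         real (the_enat (VCdim_on {z. T \<le> length z} (loss_class F T)))
           \<le> 3 * real d * log 2 (2 * real T / ln 2)"
proof (rule VCdim_loss_class_le[OF assms(1)])
  show "card S \<le> d" if "finite S" "N_shatters F S" for S
    using card_le_VCdim[OF assms(2) that(1) shatters_if_N_shatters[OF that(2)]] .
  show "1 \<le> log 2 (2 * real T / ln 2)"
    using assms(1) ln_2_less_1 by (simp add: le_divide_eq)
  then show "2 * log 2 (2 * real (CARD(bool) choose 2) * real T / ln 2) \<le> 3 * log 2 (2 * real T / ln 2)"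
    by simp
qed

lemma VCdim_loss_class_Ndim:
  fixes F :: "('a::finite list \<Rightarrow> 'a) set"
  assumes "1 \<le> T" and "Ndim F = enat d"
  shows "VCdim_on {z. T \<le> length z} (loss_class F T) \<noteq> \<infinity> \<and>
         real (the_enat (VCdim_on {z. T \<le> length z} (loss_class F T)))
           \<le> 3 * real d * log 2 (2 * real d * real CARD('a) ^ 2 * real T / (exp 1 * ln 2))"
proof (rule VCdim_loss_class_le[OF assms(1)])
  show "card S \<le> d" if "finite S" "N_shatters F S" for S
    using card_le_Ndim[OF assms(2) that] .
  assume "d \<noteq> 0"
  have "2 \<le> CARD('a)"
  proof (rule ccontr)
    assume "\<not> 2 \<le> CARD('a)"
    then have "Ndim F = 0"
      by (intro Ndim_eq_0_if_card_le_1) simp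
    with assms(2) \<open>d \<noteq> 0\<close> show False
      by (simp add: zero_enat_def)
  qed
  then show "1 \<le> log 2 (2 * real d * real CARD('a) ^ 2 * real T / (exp 1 * ln 2))"
    and "2 * log 2 (2 * real (CARD('a) choose 2) * real T / ln 2)
           \<le> 3 * log 2 (2 * real d * real CARD('a) ^ 2 * real T / (exp 1 * ln 2))"
    using log_estimates_Ndim_bound[of "CARD('a)" d T] \<open>d \<noteq> 0\<close> assms(1) by auto
qed

theorem theoremB5:
  fixes T :: nat
  assumes "T \<ge> 1"
  shows "(\<forall>(F :: (bool list \<Rightarrow> bool) set) d.
            VCdim F = enat d \<longrightarrow>
            VCdim_on {z. T \<le> length z} (loss_class F T) \<noteq> \<infinity> \<and>
            real (the_enat (VCdim_on {z. T \<le> length z} (loss_class F T)))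
              \<le> 3 * real d * log 2 (2 * real T / ln 2))
       \<and> (CARD('a) \<noteq> 2 \<longrightarrow>
          (\<forall>(F :: ('a::finite list \<Rightarrow> 'a) set) d.
            Ndim F = enat d \<longrightarrow>
            VCdim_on {z. T \<le> length z} (loss_class F T) \<noteq> \<infinity> \<and>
            real (the_enat (VCdim_on {z. T \<le> length z} (loss_class F T)))
              \<le> 3 * real d * log 2 (2 * real d * real (CARD('a))^2 * real T / (exp 1 * ln 2))))"
  using VCdim_loss_class_binary[OF assms] VCdim_loss_class_Ndim[OF assms] by blast

end
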